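(* Let $G=(V,E)$ be a connected undirected graph with labeled nodes $1,\dots,n_l$ ($1\le n_l<n$), edge costs $d_e>0$, and let $p$ be an unlabeled node. For every $\lambda\ge0$, the oriented flow subgraph $G_p(\lambda)$ is a directed acyclic graph.
   Context: Orient each edge arbitrarily; let $A$ be the $n\times m$ signed incidence matrix ($A_{ie}=+1$, $A_{je}=-1$ for $e$ oriented from $i$ to $j$) and $A_u$ its rows indexed by unlabeled nodes $n_l+1,\dots,n$. Let $\vec b_p\in\mathbb R^{n-n_l}$ be zero except $-1$ at the entry of $p$. For $\lambda\ge0$ let $\vec x$ be the unique minimizer of $\frac12\sum_{e=1}^m d_e(x_e^2+\lambda|x_e|)$ subject to $A_u\vec x=\vec b_p$. The flow subgraph $G_p(\lambda)$ consists of all edges $e$ with $x_e\neq0$ and the nodes incident to them; it is oriented by keeping the chosen orientation of $e$ if $x_e>0$ and reversing it if $x_e<0$ (so that the flow is positive on every edge of $G_p(\lambda)$). *)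

theory Defs
  imports Main "HOL-Library.Extended_Real" Complex_Main
begin

text \<open>Nodes are 1..n, edges are indexed 0..<m. Edge e is oriented from src e to tgt e.\<close>

definition incidence :: "(nat \<Rightarrow> nat) \<Rightarrow> (nat \<Rightarrow> nat) \<Rightarrow> nat \<Rightarrow> nat \<Rightarrow> real" where
  "incidence src tgt i e = (if i = src e then 1 else if i = tgt e then -1 else 0)"

definition objective :: "nat \<Rightarrow> (nat \<Rightarrow> real) \<Rightarrow> real \<Rightarrow> (nat \<Rightarrow> real) \<Rightarrow> real" where
  "objective m d lam x = (1/2) * (\<Sum>e<m. d e * ((x e)^2 + lam * \<bar>x e\<bar>))"

text \<open>Constraint A_u x = b_p: rows of unlabeled nodes n_l+1..n.\<close>
definition feasible :: "nat \<Rightarrow> nat \<Rightarrow> nat \<Rightarrow> (nat \<Rightarrow> nat) \<Rightarrow> (nat \<Rightarrow> nat) \<Rightarrow> nat \<Rightarrow> (nat \<Rightarrow> real) \<Rightarrow> bool" where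
  "feasible n nl m src tgt p x \<longleftrightarrow>
     (\<forall>i \<in> {nl+1..n}. (\<Sum>e<m. incidence src tgt i e * x e) = (if i = p then -1 else 0))"

definition is_minimizer :: "nat \<Rightarrow> nat \<Rightarrow> nat \<Rightarrow> (nat \<Rightarrow> nat) \<Rightarrow> (nat \<Rightarrow> nat) \<Rightarrow> (nat \<Rightarrow> real)
    \<Rightarrow> real \<Rightarrow> nat \<Rightarrow> (nat \<Rightarrow> real) \<Rightarrow> bool" where
  "is_minimizer n nl m src tgt d lam p x \<longleftrightarrow>
     feasible n nl m src tgt p x \<and>
     (\<forall>y. feasible n nl m src tgt p y \<longrightarrow> objective m d lam x \<le> objective m d lam y)"

definition flow_arcs :: "nat \<Rightarrow> (nat \<Rightarrow> nat) \<Rightarrow> (nat \<Rightarrow> nat) \<Rightarrow> (nat \<Rightarrow> real) \<Rightarrow> (nat \<times> nat) set" where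
  "flow_arcs m src tgt x =
     {(src e, tgt e) | e. e < m \<and> x e > 0} \<union> {(tgt e, src e) | e. e < m \<and> x e < 0}"

definition undirected_edges :: "nat \<Rightarrow> (nat \<Rightarrow> nat) \<Rightarrow> (nat \<Rightarrow> nat) \<Rightarrow> (nat \<times> nat) set" where
  "undirected_edges m src tgt = {(src e, tgt e) | e. e < m} \<union> {(tgt e, src e) | e. e < m}"

end

theory Submission
  imports Defs
begin

text \<open>A directed cycle of the flow subgraph yields a nonzero circulation \<open>w\<close> that is conformal to the
  optimal flow \<open>x\<close>: it lives on edges carrying flow and agrees with \<open>x\<close> in sign on each of them.
  Then \<open>x - t w\<close> is still feasible for every \<open>t\<close>, and for small \<open>t > 0\<close> it shrinks \<open>|x\<^sub>e|\<close> on the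
  support of \<open>w\<close> without changing the other entries. Every summand of the objective is strictly
  increasing in \<open>|x\<^sub>e|\<close>, so the objective strictly decreases, contradicting minimality.\<close>

definition divergence :: "nat \<Rightarrow> (nat \<Rightarrow> nat) \<Rightarrow> (nat \<Rightarrow> nat) \<Rightarrow> (nat \<Rightarrow> real) \<Rightarrow> nat \<Rightarrow> real" where
  "divergence m src tgt w i = (\<Sum>e<m. incidence src tgt i e * w e)"

text \<open>\<open>w\<close> abstracts the signed sum of the edge vectors along a walk from \<open>a\<close> to \<open>b\<close> in the
  flow subgraph; for \<open>a = b\<close> it is a circulation.\<close>
definition conformal_flow ::
    "nat \<Rightarrow> (nat \<Rightarrow> nat) \<Rightarrow> (nat \<Rightarrow> nat) \<Rightarrow> (nat \<Rightarrow> real) \<Rightarrow> nat \<Rightarrow> nat \<Rightarrow> (nat \<Rightarrow> real) \<Rightarrow> bool" where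
  "conformal_flow m src tgt x a b w \<longleftrightarrow>
     (\<forall>e. w e \<noteq> 0 \<longrightarrow> e < m \<and> 0 < w e * x e) \<and> (\<exists>e. w e \<noteq> 0) \<and>
     (\<forall>i. divergence m src tgt w i = of_bool (i = a) - of_bool (i = b))"

lemma divergence_add:
  "divergence m src tgt (\<lambda>e. w1 e + w2 e) i = divergence m src tgt w1 i + divergence m src tgt w2 i"
  by (simp add: divergence_def distrib_left sum.distrib)

lemma divergence_diff_scaled:
  "divergence m src tgt (\<lambda>e. x e - t * w e) i = divergence m src tgt x i - t * divergence m src tgt w i"
  by (simp add: divergence_def sum_subtractf sum_distrib_left algebra_simps)

lemma conformal_flow_of_arc:
  assumes no_loops: "\<forall>e<m. src e \<noteq> tgt e"
    and arc: "(u, v) \<in> flow_arcs m src tgt x"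
  shows "\<exists>w. conformal_flow m src tgt x u v w"
proof -
  from arc obtain e where e: "e < m" "x e \<noteq> 0"
    and dir: "(x e > 0 \<and> u = src e \<and> v = tgt e) \<or> (x e < 0 \<and> u = tgt e \<and> v = src e)"
    unfolding flow_arcs_def by auto
  define w where "w = (\<lambda>e'. if e' = e then sgn (x e) else 0)"
  have "divergence m src tgt w i = (\<Sum>e'<m. if e' = e then incidence src tgt i e * sgn (x e) else 0)" for i
    unfolding divergence_def by (rule sum.cong) (auto simp: w_def)
  then have "divergence m src tgt w i = incidence src tgt i e * sgn (x e)" for i
    using e by simp
  then have "conformal_flow m src tgt x u v w"
    using e dir no_loops by (auto simp: conformal_flow_def w_def sgn_if incidence_def)
  then show ?thesis by blast
qed

lemma conformal_flow_add:
  assumes w1: "conformal_flow m src tgt x a b w1" and w2: "conformal_flow m src tgt x b c w2"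
  shows "conformal_flow m src tgt x a c (\<lambda>e. w1 e + w2 e)"
proof -
  have supp1: "w1 e \<noteq> 0 \<Longrightarrow> e < m \<and> 0 < w1 e * x e"
    and supp2: "w2 e \<noteq> 0 \<Longrightarrow> e < m \<and> 0 < w2 e * x e" for e
    using w1 w2 unfolding conformal_flow_def by blast+
  have "0 \<le> w1 e * x e" "0 \<le> w2 e * x e" for e
    using supp1[of e] supp2[of e] by (cases "w1 e = 0"; cases "w2 e = 0"; simp)+
  then have sum_pos: "0 < (w1 e + w2 e) * x e" if "0 < w1 e * x e \<or> 0 < w2 e * x e" for e
    using that add_pos_nonneg[of "w1 e * x e" "w2 e * x e"] add_nonneg_pos[of "w1 e * x e" "w2 e * x e"]
    by (auto simp: distrib_right)
  have conformal: "e < m \<and> 0 < (w1 e + w2 e) * x e" if "w1 e + w2 e \<noteq> 0" for e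
  proof -
    have "w1 e \<noteq> 0 \<or> w2 e \<noteq> 0" using that by auto
    then show ?thesis using supp1 supp2 sum_pos by blast
  qed
  obtain e where "w1 e \<noteq> 0" using w1 unfolding conformal_flow_def by blast
  then have "0 < (w1 e + w2 e) * x e" using supp1 sum_pos by blast
  then have nonzero: "\<exists>e. w1 e + w2 e \<noteq> 0" by (metis mult_zero_left less_irrefl)
  show ?thesis
    using conformal nonzero w1 w2 by (simp add: conformal_flow_def divergence_add)
qed

lemma conformal_flow_of_trancl:
  assumes no_loops: "\<forall>e<m. src e \<noteq> tgt e"
    and "(a, b) \<in> (flow_arcs m src tgt x)\<^sup>+"
  shows "\<exists>w. conformal_flow m src tgt x a b w"
  using assms(2)
proof (induction rule: trancl_induct)
  case (base b)
  then show ?case using conformal_flow_of_arc[OF no_loops] by blast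
next
  case (step b c)
  then show ?case using conformal_flow_of_arc[OF no_loops step(2)] conformal_flow_add by blast
qed

lemma abs_diff_scaled_less:
  fixes x w t :: real
  assumes "0 < w * x" "0 < t" "t * \<bar>w\<bar> \<le> \<bar>x\<bar>"
  shows "\<bar>x - t * w\<bar> < \<bar>x\<bar>"
proof -
  have "\<bar>x - t * w\<bar> = \<bar>x\<bar> - t * \<bar>w\<bar>"
    using assms by (cases "x > 0") (auto simp: abs_if zero_less_mult_iff)
  moreover have "0 < t * \<bar>w\<bar>" using assms by (auto simp: zero_less_mult_iff)
  ultimately show ?thesis by simp
qed

text \<open>The step size is capped by \<open>1\<close> only so that the minimum is taken over a nonempty set.\<close>
lemma exists_shrinking_step:
  fixes x w :: "nat \<Rightarrow> real"
  assumes "finite S" "\<And>e. e \<in> S \<Longrightarrow> 0 < w e * x e"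
  obtains t where "0 < t" "\<And>e. e \<in> S \<Longrightarrow> \<bar>x e - t * w e\<bar> < \<bar>x e\<bar>"
proof
  define t where "t = Min (insert 1 ((\<lambda>e. \<bar>x e\<bar> / \<bar>w e\<bar>) ` S))"
  have ratio_pos: "0 < \<bar>x e\<bar> / \<bar>w e\<bar>" if "e \<in> S" for e
  proof -
    have "x e \<noteq> 0" "w e \<noteq> 0" using assms(2)[OF that] by auto
    then show ?thesis by simp
  qed
  show t_pos: "0 < t" unfolding t_def using assms(1) ratio_pos by simp
  show "\<bar>x e - t * w e\<bar> < \<bar>x e\<bar>" if "e \<in> S" for e
  proof (rule abs_diff_scaled_less)
    show "0 < w e * x e" using assms(2)[OF that] .
    show "0 < t" by (fact t_pos)
    have "t \<le> \<bar>x e\<bar> / \<bar>w e\<bar>" unfolding t_def using assms(1) that by simp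
    moreover have "0 < \<bar>w e\<bar>" using assms(2)[OF that] by auto
    ultimately show "t * \<bar>w e\<bar> \<le> \<bar>x e\<bar>" by (simp add: pos_le_divide_eq)
  qed
qed

lemma edge_cost_strict_mono:
  fixes y x lam :: real
  assumes "\<bar>y\<bar> < \<bar>x\<bar>" "0 \<le> lam"
  shows "y\<^sup>2 + lam * \<bar>y\<bar> < x\<^sup>2 + lam * \<bar>x\<bar>"
proof -
  have "y\<^sup>2 < x\<^sup>2" using assms(1) by (simp add: abs_le_square_iff less_le_not_le)
  moreover have "lam * \<bar>y\<bar> \<le> lam * \<bar>x\<bar>" using assms by (simp add: mult_left_mono)
  ultimately show ?thesis by simp
qed

lemma objective_strict_decrease:
  assumes costs: "\<forall>e<m. d e > 0" and lam: "0 \<le> lam"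
    and le: "\<And>e. e < m \<Longrightarrow> \<bar>y e\<bar> \<le> \<bar>x e\<bar>"
    and less: "e0 < m" "\<bar>y e0\<bar> < \<bar>x e0\<bar>"
  shows "objective m d lam y < objective m d lam x"
proof -
  let ?c = "\<lambda>z e. d e * ((z e)\<^sup>2 + lam * \<bar>z e\<bar>)"
  have "?c y e \<le> ?c x e" if "e < m" for e
  proof (cases "\<bar>y e\<bar> = \<bar>x e\<bar>")
    case True
    then have "(y e)\<^sup>2 = (x e)\<^sup>2" by (metis power2_abs)
    with True show ?thesis by simp
  next
    case False
    with le[OF that] have "\<bar>y e\<bar> < \<bar>x e\<bar>" by simp
    from edge_cost_strict_mono[OF this lam] costs that show ?thesis by simp
  qed
  moreover have "?c y e0 < ?c x e0"
    using edge_cost_strict_mono[OF less(2) lam] costs less(1) by simp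
  ultimately have "(\<Sum>e<m. ?c y e) < (\<Sum>e<m. ?c x e)"
    using less(1) by (intro sum_strict_mono_ex1) auto
  then show ?thesis unfolding objective_def by simp
qed

lemma feasible_diff_circulation:
  assumes "feasible n nl m src tgt p x" "\<And>i. divergence m src tgt w i = 0"
  shows "feasible n nl m src tgt p (\<lambda>e. x e - t * w e)"
  using assms divergence_diff_scaled[of m src tgt x t w]
  unfolding feasible_def divergence_def by simp

lemma minimizer_has_no_conformal_circulation:
  assumes costs: "\<forall>e<m. d e > 0" and lam: "0 \<le> lam"
    and xmin: "is_minimizer n nl m src tgt d lam p x"
    and w: "conformal_flow m src tgt x v v w"
  shows False
proof -
  define S where "S = {e. w e \<noteq> 0}"
  have supp: "\<And>e. e \<in> S \<Longrightarrow> e < m \<and> 0 < w e * x e"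
    using w unfolding conformal_flow_def S_def by blast
  have "finite S" using supp by (meson finite_lessThan finite_subset lessThan_iff subsetI)
  then obtain t where "0 < t" and shrink: "\<And>e. e \<in> S \<Longrightarrow> \<bar>x e - t * w e\<bar> < \<bar>x e\<bar>"
    using exists_shrinking_step supp by blast
  define y where "y = (\<lambda>e. x e - t * w e)"
  obtain e0 where e0: "e0 \<in> S" using w unfolding conformal_flow_def S_def by blast
  have "feasible n nl m src tgt p y"
    unfolding y_def
  proof (rule feasible_diff_circulation)
    show "feasible n nl m src tgt p x" using xmin unfolding is_minimizer_def by blast
    show "divergence m src tgt w i = 0" for i using w unfolding conformal_flow_def by simp
  qed
  then have "objective m d lam x \<le> objective m d lam y"
    using xmin unfolding is_minimizer_def by blast
  moreover have "objective m d lam y < objective m d lam x"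
  proof (rule objective_strict_decrease[OF costs lam])
    show "\<bar>y e\<bar> \<le> \<bar>x e\<bar>" for e
      using shrink[of e] by (cases "e \<in> S") (auto simp: y_def S_def)
    show "e0 < m" using supp[OF e0] by blast
    show "\<bar>y e0\<bar> < \<bar>x e0\<bar>" using shrink[OF e0] by (simp add: y_def)
  qed
  ultimately show False by simp
qed

theorem proposition3:
  fixes n nl m p :: nat and src tgt :: "nat \<Rightarrow> nat" and d :: "nat \<Rightarrow> real"
    and lam :: real and x :: "nat \<Rightarrow> real"
  assumes nl: "1 \<le> nl" "nl < n"
    and endpoints: "\<forall>e<m. src e \<in> {1..n} \<and> tgt e \<in> {1..n}"
    and no_loops: "\<forall>e<m. src e \<noteq> tgt e"
    and simple: "\<forall>e<m. \<forall>e'<m. e \<noteq> e' \<longrightarrow> {src e, tgt e} \<noteq> {src e', tgt e'}"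
    and connected: "\<forall>u\<in>{1..n}. \<forall>v\<in>{1..n}. (u, v) \<in> (undirected_edges m src tgt)\<^sup>*"
    and costs: "\<forall>e<m. d e > 0"
    and p: "p \<in> {nl+1..n}"
    and lam: "lam \<ge> 0"
    and xmin: "is_minimizer n nl m src tgt d lam p x"
  shows "acyclic (flow_arcs m src tgt x)"
proof (rule acyclicI, intro allI notI)
  fix v assume "(v, v) \<in> (flow_arcs m src tgt x)\<^sup>+"
  then obtain w where "conformal_flow m src tgt x v v w"
    using conformal_flow_of_trancl[OF no_loops] by blast
  then show False using minimizer_has_no_conformal_circulation[OF costs lam xmin] by blast
qed

end
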